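(* Fix $\varepsilon\in(0,1)$. For every $\alpha>0$ and $k>0$, $$\limsup_{n\to\infty}\mathbb{U}^n\left(\Big||\triangle_\alpha(\sigma)|-2\varepsilon\alpha\sqrt{n\log n}\Big|\ge k\sqrt{2\varepsilon\alpha}\,(n\log n)^{1/4}\right)\le\frac{1}{k^2},$$ where $\sigma$ is distributed according to $\mathbb{U}^n$.
   Context: $\mathbb{U}^n$ is the uniform measure on $S_n$; for $\sigma\in S_n$, $\sigma(j)$ is interpreted as the position of card $j$. For fixed $\varepsilon\in(0,1)$, $D^n=[n]\cap[n(1-\varepsilon)/2,\,n(1+\varepsilon)/2]$ and, for $\alpha>0$ and $\sigma\in S_n$, $\triangle_\alpha(\sigma)=\{j\in D^n:|\sigma(j)-j|\le\alpha\sqrt{n\log n}\}$. $\log$ is the natural logarithm. *)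

theory Defs
  imports "HOL-Analysis.Analysis" "HOL-Combinatorics.Permutations"
begin

text \<open>Permutations of [n] = {1..n}; sigma j is the position of card j.\<close>

definition Dn :: "real \<Rightarrow> nat \<Rightarrow> nat set" where
  "Dn \<epsilon> n = {j \<in> {1..n}. real n * (1 - \<epsilon>) / 2 \<le> real j \<and> real j \<le> real n * (1 + \<epsilon>) / 2}"

definition tri :: "real \<Rightarrow> real \<Rightarrow> nat \<Rightarrow> (nat \<Rightarrow> nat) \<Rightarrow> nat set" where
  "tri \<epsilon> \<alpha> n \<sigma> = {j \<in> Dn \<epsilon> n. \<bar>real (\<sigma> j) - real j\<bar> \<le> \<alpha> * sqrt (real n * ln (real n))}"

definition unif_prob :: "nat \<Rightarrow> ((nat \<Rightarrow> nat) \<Rightarrow> bool) \<Rightarrow> real" where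
  "unif_prob n P = real (card {\<sigma>. \<sigma> permutes {1..n} \<and> P \<sigma>}) / real (card {\<sigma>. \<sigma> permutes {1..n}})"

end

theory Submission
  imports Defs "HOL-Real_Asymp.Real_Asymp"
begin

(*
  Let a = \<alpha> sqrt (n log n) and let W j be the window of positions within distance a of j, so that
  |\<triangle>\<^sub>\<alpha>(\<sigma>)| = #{j \<in> D. \<sigma> j \<in> W j}.  Under the uniform measure \<sigma> j is uniform on [n] and
  (\<sigma> i, \<sigma> j) is uniform on the ordered pairs of distinct positions, because left multiplication by a
  permutation moves any such value to any other.  Hence the count X has mean E = \<Sum>|W j| / n and
  second moment at most E + E\<^sup>2 n / (n - 1).  Once a + 1 \<le> n (1 - \<epsilon>) / 2 every window has 2a \<plusminus> 1
  elements and |D| = \<epsilon>n \<plusminus> 1, so E = c \<plusminus> 3 with c = 2\<epsilon>a.  Chebyshev's inequality around c bounds the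
  probability by (c + 12 + (c + 3)\<^sup>2 / (n - 1)) / (k\<^sup>2 c), which tends to 1 / k\<^sup>2.
*)

lemma card_preimage_uniform:
  assumes "finite S" "finite V" "f ` S \<subseteq> V" "W \<subseteq> V"
    and transitive: "\<And>v v'. v \<in> V \<Longrightarrow> v' \<in> V \<Longrightarrow>
      \<exists>g. inj_on g S \<and> g ` {x\<in>S. f x = v} \<subseteq> {x\<in>S. f x = v'}"
  shows "card {x\<in>S. f x \<in> W} * card V = card W * card S"
proof (cases "V = {}")
  case True
  then show ?thesis using assms(3,4) by auto
next
  case False
  then obtain v0 where v0: "v0 \<in> V" by blast
  define m where "m = card {x\<in>S. f x = v0}"
  have fibre_le: "card {x\<in>S. f x = v} \<le> card {x\<in>S. f x = v'}" if vv: "v \<in> V" "v' \<in> V" for v v'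
  proof -
    obtain g where "inj_on g S" "g ` {x\<in>S. f x = v} \<subseteq> {x\<in>S. f x = v'}"
      using transitive[OF vv] by blast
    then show ?thesis
      by (intro card_inj_on_le) (auto intro: inj_on_subset simp: \<open>finite S\<close>)
  qed
  have fibre: "card {x\<in>S. f x = v} = m" if "v \<in> V" for v
    unfolding m_def using fibre_le[OF that v0] fibre_le[OF v0 that] by (rule antisym)
  have preimage: "card {x\<in>S. f x \<in> W'} = card W' * m" if "W' \<subseteq> V" for W'
  proof -
    have "card {x\<in>S. f x \<in> W'} = (\<Sum>w\<in>W'. card {x\<in>{x\<in>S. f x \<in> W'}. f x = w})"
      using sum.group[of "{x\<in>S. f x \<in> W'}" W' f "\<lambda>_. 1::nat"] that assms(1,2)
      by (simp add: finite_subset image_subset_iff)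
    also have "\<dots> = (\<Sum>w\<in>W'. m)"
      using that by (intro sum.cong refl) (auto simp flip: fibre intro!: arg_cong[where f=card])
    finally show ?thesis by simp
  qed
  have "{x\<in>S. f x \<in> V} = S"
    using assms(3) by blast
  then have "card S = card V * m"
    using preimage[of V] by simp
  then show ?thesis using preimage[OF assms(4)] by simp
qed

lemma inj_comp_left: "inj f \<Longrightarrow> inj ((\<circ>) f)"
  unfolding inj_def fun_eq_iff by auto

lemma permutes_move_pair:
  assumes "p \<in> U" "q \<in> U" "p \<noteq> q" "p' \<in> U" "q' \<in> U" "p' \<noteq> q'"
  obtains \<tau> where "\<tau> permutes U" "\<tau> p = p'" "\<tau> q = q'"
proof -
  define \<tau>\<^sub>1 where "\<tau>\<^sub>1 = Transposition.transpose p p'"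
  define \<tau> where "\<tau> = Transposition.transpose q' (\<tau>\<^sub>1 q) \<circ> \<tau>\<^sub>1"
  have "\<tau>\<^sub>1 permutes U"
    unfolding \<tau>\<^sub>1_def using assms by (simp add: permutes_swap_id)
  moreover have "\<tau>\<^sub>1 q \<noteq> p'"
    using assms unfolding \<tau>\<^sub>1_def by (metis transpose_apply_first transpose_eq_imp_eq)
  ultimately have "\<tau> permutes U" "\<tau> p = p'" "\<tau> q = q'"
    unfolding \<tau>_def using assms
    by (auto intro!: permutes_compose permutes_swap_id simp: permutes_in_image)
      (auto simp: \<tau>\<^sub>1_def transpose_def)
  then show thesis by (rule that)
qed

lemma card_permutes_hit:
  assumes "finite U" "j \<in> U" "A \<subseteq> U"
  shows "card {\<sigma>. \<sigma> permutes U \<and> \<sigma> j \<in> A} * card U = card A * fact (card U)"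
proof -
  have "card {\<sigma>\<in>{\<sigma>. \<sigma> permutes U}. \<sigma> j \<in> A} * card U = card A * card {\<sigma>. \<sigma> permutes U}"
  proof (rule card_preimage_uniform)
    fix v v' assume "v \<in> U" "v' \<in> U"
    then have swap: "Transposition.transpose v v' permutes U" by (rule permutes_swap_id)
    show "\<exists>g. inj_on g {\<sigma>. \<sigma> permutes U} \<and>
        g ` {\<sigma>\<in>{\<sigma>. \<sigma> permutes U}. \<sigma> j = v} \<subseteq> {\<sigma>\<in>{\<sigma>. \<sigma> permutes U}. \<sigma> j = v'}"
      using swap by (intro exI[of _ "(\<circ>) (Transposition.transpose v v')"])
        (auto intro: inj_on_subset[OF inj_comp_left] permutes_inj permutes_compose)
  qed (use assms in \<open>auto simp: finite_permutations permutes_in_image\<close>)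
  then show ?thesis
    using card_permutations[OF refl assms(1)] by simp
qed

lemma card_permutes_hit_pair:
  assumes "finite U" "i \<in> U" "j \<in> U" "i \<noteq> j" "A \<subseteq> U" "B \<subseteq> U"
  shows "card {\<sigma>. \<sigma> permutes U \<and> \<sigma> i \<in> A \<and> \<sigma> j \<in> B} * (card U * (card U - 1))
           \<le> card A * card B * fact (card U)"
proof -
  let ?S = "{\<sigma>. \<sigma> permutes U}"
  let ?V = "{(p, q) \<in> U \<times> U. p \<noteq> q}"
  have card_V: "card ?V = card U * (card U - 1)"
  proof -
    have "?V = U \<times> U - (\<lambda>p. (p, p)) ` U" by auto
    also have "card \<dots> = card U * card U - card U * 1"
      using assms(1) by (subst card_Diff_subset) (auto simp: card_image inj_on_def card_cartesian_product)
    finally have "card ?V = card U * card U - card U * 1" .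
    then show ?thesis by (simp only: diff_mult_distrib2)
  qed
  have "card {\<sigma>\<in>?S. (\<sigma> i, \<sigma> j) \<in> A \<times> B \<inter> ?V} * card ?V = card (A \<times> B \<inter> ?V) * card ?S"
  proof (rule card_preimage_uniform)
    show "(\<lambda>\<sigma>. (\<sigma> i, \<sigma> j)) ` ?S \<subseteq> ?V"
      using assms by (auto simp: permutes_in_image dest: permutes_inj injD)
  next
    fix v v' assume "v \<in> ?V" "v' \<in> ?V"
    then obtain p q p' q' where v: "v = (p, q)" "v' = (p', q')"
      and pq: "p \<in> U" "q \<in> U" "p \<noteq> q" "p' \<in> U" "q' \<in> U" "p' \<noteq> q'"
      by auto
    obtain \<tau> where "\<tau> permutes U" "\<tau> p = p'" "\<tau> q = q'"
      using permutes_move_pair[OF pq] .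
    then show "\<exists>g. inj_on g ?S \<and>
        g ` {\<sigma>\<in>?S. (\<sigma> i, \<sigma> j) = v} \<subseteq> {\<sigma>\<in>?S. (\<sigma> i, \<sigma> j) = v'}"
      unfolding v by (intro exI[of _ "(\<circ>) \<tau>"])
        (auto intro: inj_on_subset[OF inj_comp_left] permutes_inj permutes_compose)
  qed (use assms finite_subset[of ?V "U \<times> U"] in \<open>auto simp: finite_permutations\<close>)
  moreover have "{\<sigma>\<in>?S. (\<sigma> i, \<sigma> j) \<in> A \<times> B \<inter> ?V} = {\<sigma>. \<sigma> permutes U \<and> \<sigma> i \<in> A \<and> \<sigma> j \<in> B}"
    using assms by (auto dest: permutes_inj injD)
  moreover have "card (A \<times> B \<inter> ?V) \<le> card A * card B"
  proof -
    have "card (A \<times> B \<inter> ?V) \<le> card (A \<times> B)"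
      using assms(1,5,6) by (intro card_mono) (auto intro: finite_subset)
    then show ?thesis by (simp add: card_cartesian_product)
  qed
  ultimately show ?thesis
    using card_permutations[OF refl assms(1)] card_V by (simp add: mult_right_mono)
qed

lemma sum_card_filter_swap:
  assumes "finite S" "finite D"
  shows "(\<Sum>x\<in>S. card {j\<in>D. P x j}) = (\<Sum>j\<in>D. card {x\<in>S. P x j})"
proof -
  have "(\<Sum>x\<in>S. card {j\<in>D. P x j}) = (\<Sum>x\<in>S. \<Sum>j\<in>D. of_bool (P x j))"
    using assms(2) by (simp add: Collect_conj_eq Int_commute)
  also have "\<dots> = (\<Sum>j\<in>D. \<Sum>x\<in>S. of_bool (P x j))"
    by (rule sum.swap)
  also have "\<dots> = (\<Sum>j\<in>D. card {x\<in>S. P x j})"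
    using assms(1) by (simp add: Collect_conj_eq Int_commute)
  finally show ?thesis .
qed

lemma sum_square_card_filter:
  assumes "finite S" "finite D"
  shows "(\<Sum>x\<in>S. (card {j\<in>D. P x j})^2) = (\<Sum>i\<in>D. \<Sum>j\<in>D. card {x\<in>S. P x i \<and> P x j})"
proof -
  have "(card {j\<in>D. P x j})^2 = card {ij\<in>D \<times> D. P x (fst ij) \<and> P x (snd ij)}" for x
  proof -
    have "{ij\<in>D \<times> D. P x (fst ij) \<and> P x (snd ij)} = {j\<in>D. P x j} \<times> {j\<in>D. P x j}"
      by auto
    then show ?thesis by (simp add: power2_eq_square card_cartesian_product)
  qed
  then have "(\<Sum>x\<in>S. (card {j\<in>D. P x j})^2)
      = (\<Sum>ij\<in>D \<times> D. card {x\<in>S. P x (fst ij) \<and> P x (snd ij)})"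
    using sum_card_filter_swap[OF assms(1) finite_cartesian_product[OF assms(2,2)]] by simp
  then show ?thesis by (simp add: sum.cartesian_product case_prod_beta)
qed

lemma sum_permutes_hits:
  assumes "finite U" "D \<subseteq> U" "\<And>j. j \<in> D \<Longrightarrow> A j \<subseteq> U"
  shows "(\<Sum>\<sigma> | \<sigma> permutes U. real (card {j\<in>D. \<sigma> j \<in> A j})) * real (card U)
           = fact (card U) * (\<Sum>j\<in>D. real (card (A j)))"
proof -
  have "finite D" using assms(1,2) by (rule finite_subset[rotated])
  have "(\<Sum>\<sigma> | \<sigma> permutes U. real (card {j\<in>D. \<sigma> j \<in> A j}))
      = (\<Sum>j\<in>D. real (card {\<sigma>. \<sigma> permutes U \<and> \<sigma> j \<in> A j}))"
    using arg_cong[where f=real, OF sum_card_filter_swap[OF finite_permutations[OF assms(1)] \<open>finite D\<close>]]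
    by simp
  also have "\<dots> * real (card U) = (\<Sum>j\<in>D. fact (card U) * real (card (A j)))"
    unfolding sum_distrib_right
  proof (intro sum.cong refl)
    fix j assume "j \<in> D"
    then have hit_count: "card {\<sigma>. \<sigma> permutes U \<and> \<sigma> j \<in> A j} * card U = card (A j) * fact (card U)"
      using assms by (intro card_permutes_hit) auto
    show "real (card {\<sigma>. \<sigma> permutes U \<and> \<sigma> j \<in> A j}) * real (card U)
        = fact (card U) * real (card (A j))"
      using arg_cong[where f=real, OF hit_count] by (simp add: mult_ac)
  qed
  finally show ?thesis by (simp add: sum_distrib_left)
qed

lemma sum_permutes_hits_squared:
  assumes "finite U" "U \<noteq> {}" "D \<subseteq> U" "\<And>j. j \<in> D \<Longrightarrow> A j \<subseteq> U"
  defines "M \<equiv> \<Sum>j\<in>D. real (card (A j))"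
  shows "(\<Sum>\<sigma> | \<sigma> permutes U. real (card {j\<in>D. \<sigma> j \<in> A j})^2) * (real (card U) * (real (card U) - 1))
           \<le> fact (card U) * ((real (card U) - 1) * M + M^2)"
proof -
  let ?n = "real (card U)" and ?N = "fact (card U) :: real"
  let ?pair = "\<lambda>i j. real (card {\<sigma>. \<sigma> permutes U \<and> \<sigma> i \<in> A i \<and> \<sigma> j \<in> A j})"
  have "finite D" using assms(1,3) by (rule finite_subset[rotated])
  have "card U \<ge> 1" using assms(1,2) by (simp add: Suc_leI card_gt_0_iff)
  have sum_pairs: "(\<Sum>\<sigma> | \<sigma> permutes U. real (card {j\<in>D. \<sigma> j \<in> A j})^2)
      = (\<Sum>i\<in>D. \<Sum>j\<in>D. ?pair i j)"
    using arg_cong[where f=real, OF sum_square_card_filter[OF finite_permutations[OF assms(1)] \<open>finite D\<close>]]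
    by simp
  have pair_bound: "?pair i j * (?n * (?n - 1))
      \<le> ?N * ((if i = j then (?n - 1) * real (card (A i)) else 0) + real (card (A i)) * real (card (A j)))"
    if "i \<in> D" "j \<in> D" for i j
  proof (cases "i = j")
    case True
    have hit_count: "card {\<sigma>. \<sigma> permutes U \<and> \<sigma> i \<in> A i} * card U = card (A i) * fact (card U)"
      using assms that by (intro card_permutes_hit) auto
    have "?pair i j * ?n = ?N * real (card (A i))"
      using True arg_cong[where f=real, OF hit_count] by (simp add: mult_ac)
    moreover have "?n - 1 \<ge> 0" using \<open>card U \<ge> 1\<close> by simp
    ultimately show ?thesis
      using True by (simp add: algebra_simps mult_left_mono)
  next
    case False
    have "card {\<sigma>. \<sigma> permutes U \<and> \<sigma> i \<in> A i \<and> \<sigma> j \<in> A j} * (card U * (card U - 1))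
        \<le> card (A i) * card (A j) * fact (card U)"
      using assms that False by (intro card_permutes_hit_pair) auto
    then have "real (card {\<sigma>. \<sigma> permutes U \<and> \<sigma> i \<in> A i \<and> \<sigma> j \<in> A j} * (card U * (card U - 1)))
        \<le> real (card (A i) * card (A j) * fact (card U))"
      by (rule of_nat_mono)
    then show ?thesis using False \<open>card U \<ge> 1\<close> by (simp add: of_nat_diff mult_ac)
  qed
  have "(\<Sum>i\<in>D. \<Sum>j\<in>D. ?pair i j) * (?n * (?n - 1))
      \<le> (\<Sum>i\<in>D. \<Sum>j\<in>D. ?N * ((if i = j then (?n - 1) * real (card (A i)) else 0)
                                + real (card (A i)) * real (card (A j))))"
    unfolding sum_distrib_right by (intro sum_mono pair_bound)
  also have "\<dots> = ?N * (\<Sum>i\<in>D. \<Sum>j\<in>D. (if i = j then (?n - 1) * real (card (A i)) else 0)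
                                + real (card (A i)) * real (card (A j)))"
    by (simp only: sum_distrib_left)
  also have "(\<Sum>i\<in>D. \<Sum>j\<in>D. (if i = j then (?n - 1) * real (card (A i)) else 0)
                                + real (card (A i)) * real (card (A j))) = (?n - 1) * M + M^2"
  proof -
    have "(\<Sum>i\<in>D. \<Sum>j\<in>D. if i = j then (?n - 1) * real (card (A i)) else 0) = (?n - 1) * M"
      using \<open>finite D\<close> by (simp add: M_def sum_distrib_left)
    moreover have "(\<Sum>i\<in>D. \<Sum>j\<in>D. real (card (A i)) * real (card (A j))) = M^2"
      by (simp only: M_def power2_eq_square sum_product)
    ultimately show ?thesis by (simp only: sum.distrib)
  qed
  finally show ?thesis unfolding sum_pairs by simp
qed

lemma card_abs_ge_mult_square_le_sum_squares:
  fixes Y :: "'a \<Rightarrow> real"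
  assumes "finite S" "0 \<le> t"
  shows "real (card {x\<in>S. t \<le> \<bar>Y x\<bar>}) * t^2 \<le> (\<Sum>x\<in>S. (Y x)^2)"
proof -
  have "real (card {x\<in>S. t \<le> \<bar>Y x\<bar>}) * t^2 = (\<Sum>x\<in>{x\<in>S. t \<le> \<bar>Y x\<bar>}. t^2)"
    by simp
  also have "\<dots> \<le> (\<Sum>x\<in>{x\<in>S. t \<le> \<bar>Y x\<bar>}. (Y x)^2)"
    using assms(2) by (intro sum_mono) (metis (mono_tags) mem_Collect_eq power2_abs power_mono)
  also have "\<dots> \<le> (\<Sum>x\<in>S. (Y x)^2)"
    using assms(1) by (intro sum_mono2) auto
  finally show ?thesis .
qed

lemma card_permutes_hits_deviation:
  assumes "finite U" "card U \<ge> 2" "D \<subseteq> U" "\<And>j. j \<in> D \<Longrightarrow> A j \<subseteq> U" "0 \<le> t"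
  defines "E \<equiv> (\<Sum>j\<in>D. real (card (A j))) / real (card U)"
  shows "real (card {\<sigma>. \<sigma> permutes U \<and> t \<le> \<bar>real (card {j\<in>D. \<sigma> j \<in> A j}) - c\<bar>}) * t^2
           \<le> fact (card U) * (E + (E - c)^2 + E^2 / (real (card U) - 1))"
proof -
  let ?S = "{\<sigma>. \<sigma> permutes U}" and ?n = "real (card U)" and ?N = "fact (card U) :: real"
  let ?H = "\<lambda>\<sigma>. real (card {j\<in>D. \<sigma> j \<in> A j})"
  have n: "?n \<ge> 2" using assms(2) by simp
  have "U \<noteq> {}" using assms(2) by auto
  have first: "(\<Sum>\<sigma>\<in>?S. ?H \<sigma>) = ?N * E"
    using sum_permutes_hits[OF assms(1,3,4)] n by (simp add: E_def field_simps)
  have second: "(\<Sum>\<sigma>\<in>?S. (?H \<sigma>)^2) \<le> ?N * (E + E^2 * ?n / (?n - 1))"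
  proof -
    have "(\<Sum>\<sigma>\<in>?S. (?H \<sigma>)^2) \<le> ?N * ((?n - 1) * (E * ?n) + (E * ?n)^2) / (?n * (?n - 1))"
      using sum_permutes_hits_squared[OF assms(1) \<open>U \<noteq> {}\<close> assms(3,4)] n
      by (simp add: E_def pos_le_divide_eq)
    also have "\<dots> = ?N * (E + E^2 * ?n / (?n - 1))"
      using n by (simp add: field_simps power2_eq_square)
    finally show ?thesis .
  qed
  have "real (card {\<sigma>\<in>?S. t \<le> \<bar>?H \<sigma> - c\<bar>}) * t^2 \<le> (\<Sum>\<sigma>\<in>?S. (?H \<sigma> - c)^2)"
    using finite_permutations[OF assms(1)] assms(5) by (rule card_abs_ge_mult_square_le_sum_squares)
  also have "\<dots> = (\<Sum>\<sigma>\<in>?S. (?H \<sigma>)^2) - 2 * c * (\<Sum>\<sigma>\<in>?S. ?H \<sigma>) + c^2 * ?N"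
    by (simp add: power2_diff sum.distrib sum_subtractf sum_distrib_left mult_ac
        card_permutations[OF refl assms(1)])
  also have "\<dots> \<le> ?N * (E + E^2 * ?n / (?n - 1)) - 2 * c * (?N * E) + c^2 * ?N"
    using second unfolding first by simp
  also have "\<dots> = ?N * (E + (E - c)^2 + E^2 / (?n - 1))"
    using n by (simp add: field_simps power2_eq_square)
  finally show ?thesis by simp
qed

lemma card_nat_interval_approx:
  fixes x y :: real
  assumes "0 \<le> x" "x \<le> y"
  shows "\<bar>real (card {p::nat. x \<le> real p \<and> real p \<le> y}) - (y - x)\<bar> \<le> 1"
proof -
  have "{p::nat. x \<le> real p \<and> real p \<le> y} = {nat \<lceil>x\<rceil>..<nat (\<lfloor>y\<rfloor> + 1)}"
    using assms by (auto simp: ceiling_le_iff nat_le_iff zless_nat_eq_int_zless le_floor_iff)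
  moreover have "\<lceil>x\<rceil> \<le> \<lfloor>y\<rfloor> + 1" "0 \<le> \<lceil>x\<rceil>"
    using assms by linarith+
  ultimately have "real (card {p::nat. x \<le> real p \<and> real p \<le> y}) = of_int (\<lfloor>y\<rfloor> + 1 - \<lceil>x\<rceil>)"
    by (simp add: of_nat_diff nat_diff_distrib' flip: nat_diff_distrib)
  then show ?thesis by linarith
qed

definition window :: "nat \<Rightarrow> real \<Rightarrow> nat \<Rightarrow> nat set" where
  "window n a j = {p\<in>{1..n}. \<bar>real p - real j\<bar> \<le> a}"

lemma tri_eq_window_hits:
  assumes "\<sigma> permutes {1..n}"
  shows "tri \<epsilon> \<alpha> n \<sigma> = {j\<in>Dn \<epsilon> n. \<sigma> j \<in> window n (\<alpha> * sqrt (real n * ln (real n))) j}"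
  using permutes_in_image[OF assms] by (auto simp: tri_def window_def Dn_def)

lemma card_window_approx:
  assumes "0 \<le> a" "1 \<le> real j - a" "real j + a \<le> real n"
  shows "\<bar>real (card (window n a j)) - 2 * a\<bar> \<le> 1"
proof -
  have "window n a j = {p. real j - a \<le> real p \<and> real p \<le> real j + a}"
    using assms by (auto simp: window_def abs_le_iff)
  then show ?thesis
    using card_nat_interval_approx[of "real j - a" "real j + a"] assms by simp
qed

lemma card_Dn_approx:
  assumes "0 \<le> \<epsilon>" "\<epsilon> \<le> 1" "1 \<le> real n * (1 - \<epsilon>) / 2"
  shows "\<bar>real (card (Dn \<epsilon> n)) - \<epsilon> * real n\<bar> \<le> 1"
proof -
  let ?x = "real n * (1 - \<epsilon>) / 2" and ?y = "real n * (1 + \<epsilon>) / 2"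
  have "Dn \<epsilon> n = {p. ?x \<le> real p \<and> real p \<le> ?y}"
    using assms by (auto simp: Dn_def field_simps)
  moreover have "0 \<le> ?x" "?x \<le> ?y"
    using assms by (auto intro: mult_left_mono)
  ultimately have "\<bar>real (card (Dn \<epsilon> n)) - (?y - ?x)\<bar> \<le> 1"
    by (metis card_nat_interval_approx)
  moreover have "?y - ?x = \<epsilon> * real n"
    by (simp add: field_simps)
  ultimately show ?thesis by simp
qed

lemma mean_card_window_approx:
  assumes "0 < \<epsilon>" "\<epsilon> < 1" "0 \<le> a" "a + 1 \<le> real n * (1 - \<epsilon>) / 2"
  shows "\<bar>(\<Sum>j\<in>Dn \<epsilon> n. real (card (window n a j))) / real n - 2 * \<epsilon> * a\<bar> \<le> 3"
proof -
  let ?D = "Dn \<epsilon> n"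
  have D: "\<bar>real (card ?D) - \<epsilon> * real n\<bar> \<le> 1"
    using assms by (intro card_Dn_approx) (auto intro: order_trans[of 1 "a + 1"])
  have windows: "\<bar>(\<Sum>j\<in>?D. real (card (window n a j)) - 2 * a)\<bar> \<le> real (card ?D)"
  proof -
    have "\<bar>real (card (window n a j)) - 2 * a\<bar> \<le> 1" if "j \<in> ?D" for j
      using that assms by (intro card_window_approx) (auto simp: Dn_def field_simps)
    then have "(\<Sum>j\<in>?D. \<bar>real (card (window n a j)) - 2 * a\<bar>) \<le> (\<Sum>j\<in>?D. 1)"
      by (rule sum_mono)
    then have "(\<Sum>j\<in>?D. \<bar>real (card (window n a j)) - 2 * a\<bar>) \<le> real (card ?D)"
      by simp
    then show ?thesis by (rule order_trans[OF sum_abs])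
  qed
  have "(\<Sum>j\<in>?D. real (card (window n a j))) - 2 * \<epsilon> * a * real n
      = (\<Sum>j\<in>?D. real (card (window n a j)) - 2 * a) + 2 * a * (real (card ?D) - \<epsilon> * real n)"
    by (simp add: sum_subtractf algebra_simps)
  moreover have "\<bar>2 * a * (real (card ?D) - \<epsilon> * real n)\<bar> \<le> 2 * a"
    using D assms(3) by (simp add: abs_mult mult_left_le)
  moreover have "2 * a \<le> real n" "real (card ?D) \<le> 2 * real n"
    using assms D by (auto simp: field_simps abs_le_iff)
  ultimately have "\<bar>(\<Sum>j\<in>?D. real (card (window n a j))) - 2 * \<epsilon> * a * real n\<bar> \<le> 3 * real n"
    using windows by linarith
  moreover have "real n > 0"
    using assms by (auto simp: field_simps intro: ccontr)
  moreover have "(\<Sum>j\<in>?D. real (card (window n a j))) / real n - 2 * \<epsilon> * a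
      = ((\<Sum>j\<in>?D. real (card (window n a j))) - 2 * \<epsilon> * a * real n) / real n"
    using calculation(2) by (simp add: field_simps)
  ultimately show ?thesis
    by (simp add: abs_divide pos_divide_le_eq)
qed

lemma card_tri_deviation_le:
  fixes \<epsilon> \<alpha> t :: real and n :: nat
  assumes "0 < \<epsilon>" "\<epsilon> < 1" "0 < \<alpha>" "n \<ge> 2" "0 \<le> t"
    and large: "\<alpha> * sqrt (real n * ln (real n)) + 1 \<le> real n * (1 - \<epsilon>) / 2"
  defines "c \<equiv> 2 * \<epsilon> * \<alpha> * sqrt (real n * ln (real n))"
  shows "real (card {\<sigma>. \<sigma> permutes {1..n} \<and> t \<le> \<bar>real (card (tri \<epsilon> \<alpha> n \<sigma>)) - c\<bar>}) * t^2
           \<le> fact n * (c + 12 + (c + 3)^2 / (real n - 1))"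
proof -
  define a where "a = \<alpha> * sqrt (real n * ln (real n))"
  define E where "E = (\<Sum>j\<in>Dn \<epsilon> n. real (card (window n a j))) / real (card {1..n})"
  have n: "real n \<ge> 2" using assms(4) by simp
  have "a > 0" unfolding a_def using n assms(3) by simp
  have c_eq: "c = 2 * \<epsilon> * a"
    by (simp add: c_def a_def mult_ac)
  have E: "\<bar>E - c\<bar> \<le> 3" "E \<ge> 0"
    using mean_card_window_approx[OF assms(1,2) less_imp_le[OF \<open>a > 0\<close>]] large
    by (simp_all add: E_def c_eq a_def sum_nonneg)
  have moments: "E + (E - c)^2 + E^2 / (real n - 1) \<le> c + 12 + (c + 3)^2 / (real n - 1)"
  proof -
    have "\<bar>E - c\<bar>^2 \<le> 3^2" "E^2 \<le> (c + 3)^2"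
      using E by (intro power_mono; linarith)+
    moreover have "E^2 / (real n - 1) \<le> (c + 3)^2 / (real n - 1)"
      using calculation(2) n by (intro divide_right_mono) auto
    ultimately show ?thesis using E by simp
  qed
  have "{\<sigma>. \<sigma> permutes {1..n} \<and> t \<le> \<bar>real (card (tri \<epsilon> \<alpha> n \<sigma>)) - c\<bar>}
      = {\<sigma>. \<sigma> permutes {1..n} \<and> t \<le> \<bar>real (card {j\<in>Dn \<epsilon> n. \<sigma> j \<in> window n a j}) - c\<bar>}"
    unfolding a_def by (simp add: tri_eq_window_hits cong: conj_cong)
  moreover have "real (card {\<sigma>. \<sigma> permutes {1..n} \<and> t \<le> \<bar>real (card {j\<in>Dn \<epsilon> n. \<sigma> j \<in> window n a j}) - c\<bar>}) * t^2
      \<le> fact (card {1..n}) * (E + (E - c)^2 + E^2 / (real (card {1..n}) - 1))"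
    unfolding E_def using assms(4,5)
    by (intro card_permutes_hits_deviation) (auto simp: Dn_def window_def)
  ultimately have "real (card {\<sigma>. \<sigma> permutes {1..n} \<and> t \<le> \<bar>real (card (tri \<epsilon> \<alpha> n \<sigma>)) - c\<bar>}) * t^2
      \<le> fact n * (E + (E - c)^2 + E^2 / (real n - 1))"
    by simp
  also have "\<dots> \<le> fact n * (c + 12 + (c + 3)^2 / (real n - 1))"
    using moments by (rule mult_left_mono) simp
  finally show ?thesis .
qed

lemma unif_prob_card_tri_deviation_le:
  fixes \<epsilon> \<alpha> k :: real and n :: nat
  assumes "0 < \<epsilon>" "\<epsilon> < 1" "0 < \<alpha>" "0 < k" "n \<ge> 2"
    and large: "\<alpha> * sqrt (real n * ln (real n)) + 1 \<le> real n * (1 - \<epsilon>) / 2"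
  defines "c \<equiv> 2 * \<epsilon> * \<alpha> * sqrt (real n * ln (real n))"
  shows "unif_prob n (\<lambda>\<sigma>. \<bar>real (card (tri \<epsilon> \<alpha> n \<sigma>)) - c\<bar>
             \<ge> k * sqrt (2 * \<epsilon> * \<alpha>) * (real n * ln (real n)) powr (1/4))
         \<le> (c + 12 + (c + 3)^2 / (real n - 1)) / (k^2 * c)"
proof -
  define t where "t = k * sqrt (2 * \<epsilon> * \<alpha>) * (real n * ln (real n)) powr (1/4)"
  have nlogn: "real n * ln (real n) > 0" using assms(5) by simp
  have "c > 0" unfolding c_def using nlogn assms(1,3) by simp
  have "t^2 = k^2 * 2 * \<epsilon> * \<alpha> * ((real n * ln (real n)) powr (1/4))^2"
    using assms(1,3) by (simp add: t_def power_mult_distrib)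
  also have "((real n * ln (real n)) powr (1/4))^2 = sqrt (real n * ln (real n))"
    using nlogn by (simp add: power2_eq_square powr_half_sqrt flip: powr_add)
  finally have t: "t^2 = k^2 * c" "t \<ge> 0"
    using assms by (simp_all add: c_def t_def)
  have "t^2 > 0" using t \<open>c > 0\<close> assms(4) by simp
  then have "real (card {\<sigma>. \<sigma> permutes {1..n} \<and> t \<le> \<bar>real (card (tri \<epsilon> \<alpha> n \<sigma>)) - c\<bar>}) / fact n
      \<le> (c + 12 + (c + 3)^2 / (real n - 1)) / t^2"
    using card_tri_deviation_le[OF assms(1-3,5) t(2) large, folded c_def]
    by (simp add: field_simps)
  moreover have "card {\<sigma>. \<sigma> permutes {1..n}} = fact n"
    using card_permutations[of "{1..n}" n] by simp
  ultimately show ?thesis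
    unfolding unif_prob_def t_def[symmetric] t(1) by simp
qed

theorem lemma1:
  fixes \<epsilon> \<alpha> k :: real
  assumes "0 < \<epsilon>" "\<epsilon> < 1" "0 < \<alpha>" "0 < k"
  shows "limsup (\<lambda>n. ereal (unif_prob n (\<lambda>\<sigma>.
            \<bar>real (card (tri \<epsilon> \<alpha> n \<sigma>)) - 2 * \<epsilon> * \<alpha> * sqrt (real n * ln (real n))\<bar>
              \<ge> k * sqrt (2 * \<epsilon> * \<alpha>) * (real n * ln (real n)) powr (1/4))))
         \<le> ereal (1 / k^2)"
proof -
  define c where "c n = 2 * \<epsilon> * \<alpha> * sqrt (real n * ln (real n))" for n :: nat
  define bound where "bound n = (c n + 12 + (c n + 3)^2 / (real n - 1)) / (k^2 * c n)" for n :: nat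
  have "\<forall>\<^sub>F n in sequentially. \<alpha> * sqrt (real n * ln (real n)) + 1 \<le> real n * (1 - \<epsilon>) / 2"
    using assms by real_asymp
  then have "\<forall>\<^sub>F n in sequentially. ereal (unif_prob n (\<lambda>\<sigma>. \<bar>real (card (tri \<epsilon> \<alpha> n \<sigma>)) - c n\<bar>
              \<ge> k * sqrt (2 * \<epsilon> * \<alpha>) * (real n * ln (real n)) powr (1/4))) \<le> ereal (bound n)"
    using eventually_ge_at_top[of 2]
    by eventually_elim (use assms in \<open>simp add: c_def bound_def unif_prob_card_tri_deviation_le\<close>)
  then have "limsup (\<lambda>n. ereal (unif_prob n (\<lambda>\<sigma>. \<bar>real (card (tri \<epsilon> \<alpha> n \<sigma>)) - c n\<bar>
              \<ge> k * sqrt (2 * \<epsilon> * \<alpha>) * (real n * ln (real n)) powr (1/4))))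
      \<le> limsup (\<lambda>n. ereal (bound n))"
    by (rule Limsup_mono)
  also have "(bound \<longlongrightarrow> 1 / k^2) sequentially"
    unfolding bound_def c_def using assms by (real_asymp simp: field_simps)
  then have "limsup (\<lambda>n. ereal (bound n)) = ereal (1 / k^2)"
    by (intro lim_imp_Limsup) (simp_all add: lim_ereal)
  finally show ?thesis by (simp add: c_def)
qed

end
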